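(* $\mathfrak{s}\leq\mathrm{non}^{*}(\mathrm{tr}(\mathcal{N}))\leq\mathrm{non}^{*}(\mathcal{Z})$.
   Context: $\mathfrak{s}$ is the splitting number. $\mathcal{N}$ is the ideal of Lebesgue null subsets of $2^\omega$; $\mathrm{tr}(\mathcal{N})$ is the ideal on $2^{<\omega}$ of those $A$ with $\{x\in2^{\omega}:x|_{n}\in A$ for infinitely many $n\}\in\mathcal{N}$. $\mathcal{Z}$ is the density zero ideal on $\omega$: $A\in\mathcal{Z}$ iff $\lim_n|A\cap n|/n=0$. For an ideal $\mathcal{J}$ on a countable set $X$, $\mathrm{non}^*(\mathcal{J})=\min\{|\mathcal{F}|:\mathcal{F}\subseteq[X]^{\omega}$ and for every $Y\in\mathcal{J}$ there is $F\in\mathcal{F}$ with $F\cap Y$ finite$\}$. *)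

theory Defs
  imports "HOL-Probability.Probability" "HOL-Library.Equipollence"
begin

text \<open>Cantor space 2^omega as nat => bool, with the fair coin-flipping product measure
  (the standard Lebesgue measure on 2^omega).\<close>
definition cantor_measure :: "(nat \<Rightarrow> bool) measure" where
  "cantor_measure = (\<Pi>\<^sub>M i\<in>(UNIV::nat set). measure_pmf (pmf_of_set (UNIV::bool set)))"

definition lebesgue_null :: "(nat \<Rightarrow> bool) set set" where
  "lebesgue_null = {A. \<exists>B \<in> null_sets cantor_measure. A \<subseteq> B}"

definition restr :: "(nat \<Rightarrow> bool) \<Rightarrow> nat \<Rightarrow> bool list" where
  "restr x n = map x [0..<n]"

definition trN :: "bool list set set" where
  "trN = {A. {x. \<exists>\<^sub>\<infinity> n. restr x n \<in> A} \<in> lebesgue_null}"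

definition densZ :: "nat set set" where
  "densZ = {A. (\<lambda>n. real (card (A \<inter> {..<n})) / real n) \<longlonglongrightarrow> 0}"

text \<open>F witnesses non*(J) for an ideal J on the countable set UNIV :: 'a set.\<close>
definition non_star_family :: "'a set set \<Rightarrow> 'a set set \<Rightarrow> bool" where
  "non_star_family J F \<longleftrightarrow> (\<forall>X\<in>F. infinite X) \<and> (\<forall>Y\<in>J. \<exists>X\<in>F. finite (X \<inter> Y))"

definition splitting_family :: "nat set set \<Rightarrow> bool" where
  "splitting_family S \<longleftrightarrow>
     (\<forall>A. infinite A \<longrightarrow> (\<exists>X\<in>S. infinite (A \<inter> X) \<and> infinite (A - X)))"

end

theory Submission
  imports Defs
begin

text \<open>
  s \<le> non*(tr(N)): for infinite A = {a_0 < a_1 < ...}, the strings whose length lies in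
  [a_2j, a_2j+2) and which are constant on a_j, ..., a_2j-1 form a set in tr(N) by Borel-Cantelli,
  as a random branch is constant on j given places with probability 2^(1-j). Hence some member X
  of a non*(tr(N)) family meets this set finitely. Attach to X a branch x through infinitely many
  elements of X and a partition of \<omega> into intervals so long that every x|b has an extension in X
  ending before the second cut after b. Then {n. x n} or the union of the even intervals splits A.
  Otherwise x is eventually constant on A; and if the shortest extension of x|a_i in X always
  reached a_i+1, then A would advance by at most one interval at a time and meet even and odd
  intervals infinitely often. So infinitely often that extension ends before a_i+1; it then lies
  in the set above, and these extensions are unboundedly long.

  non*(tr(N)) \<le> non*(Z): number the strings of length n by 2^n - 1, ..., 2^(n+1) - 2. A set in
  tr(N) has o(2^n) elements of length n, so its image has density zero, and the preimages of a
  non*(Z) family form a non*(tr(N)) family.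
\<close>

section \<open>The Cantor measure of sets of restrictions\<close>

lemma prob_space_cantor_measure: "prob_space cantor_measure"
  unfolding cantor_measure_def by (rule prob_space_PiM) (rule prob_space_measure_pmf)

lemma cantor_cylinder_eq_prod_emb:
  "{x. \<forall>i\<in>W. x i = v i} =
     prod_emb UNIV (\<lambda>_. measure_pmf (pmf_of_set UNIV)) W (\<Pi>\<^sub>E i\<in>W. {v i})"
  by (auto simp: prod_emb_def space_PiM PiE_iff)

lemma sets_cantor_cylinder:
  "finite W \<Longrightarrow> {x. \<forall>i\<in>W. x i = v i} \<in> sets cantor_measure"
  unfolding cantor_cylinder_eq_prod_emb cantor_measure_def by (intro sets_PiM_I) auto

lemma measure_cantor_cylinder:
  assumes "finite W"
  shows "measure cantor_measure {x. \<forall>i\<in>W. x i = v i} = (1/2) ^ card W"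
proof -
  interpret product_prob_space "\<lambda>_::nat. measure_pmf (pmf_of_set (UNIV :: bool set))" UNIV
    by unfold_locales
  have "emeasure cantor_measure {x. \<forall>i\<in>W. x i = v i} = (\<Prod>i\<in>W. ennreal (1/2))"
    unfolding cantor_cylinder_eq_prod_emb cantor_measure_def
    using assms by (simp add: emeasure_PiM_emb emeasure_pmf_single del: ennreal_1 ennreal_numeral)
  also have "\<dots> = ennreal ((1/2) ^ card W)"
    by (subst prod_ennreal) simp_all
  finally show ?thesis
    by (simp add: measure_def)
qed

lemma length_restr [simp]: "length (restr x n) = n"
  by (simp add: restr_def)

lemma nth_restr [simp]: "i < n \<Longrightarrow> restr x n ! i = x i"
  by (simp add: restr_def)

lemma restr_eq_iff: "restr x n = s \<longleftrightarrow> length s = n \<and> (\<forall>i<n. x i = s ! i)"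
  by (auto simp: list_eq_iff_nth_eq)

definition level :: "'a list set \<Rightarrow> nat \<Rightarrow> 'a list set" where
  "level Y n = {s \<in> Y. length s = n}"

lemma finite_level: "finite (level (Y :: 'a::finite list set) n)"
  by (rule finite_subset[OF _ finite_lists_length_eq[of UNIV n]]) (auto simp: level_def)

lemma restr_eq_cylinder:
  "length s = n \<Longrightarrow> {x. restr x n = s} = {x. \<forall>i\<in>{..<n}. x i = s ! i}"
  by (auto simp: restr_eq_iff)

lemma sets_restr_eq: "{x. restr x n = s} \<in> sets cantor_measure"
proof (cases "length s = n")
  case False
  then have "{x. restr x n = s} = {}"
    by auto
  then show ?thesis
    by simp
qed (simp add: restr_eq_cylinder sets_cantor_cylinder)

lemma measure_restr_eq: "length s = n \<Longrightarrow> measure cantor_measure {x. restr x n = s} = (1/2) ^ n"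
  by (simp add: restr_eq_cylinder measure_cantor_cylinder)

lemma restr_vimage_eq_UN: "{x. restr x n \<in> Y} = (\<Union>s\<in>level Y n. {x. restr x n = s})"
  by (auto simp: level_def)

lemma sets_restr_vimage: "{x. restr x n \<in> Y} \<in> sets cantor_measure"
  unfolding restr_vimage_eq_UN by (intro sets.finite_UN finite_level ballI sets_restr_eq)

lemma measure_restr_vimage:
  "measure cantor_measure {x. restr x n \<in> Y} = card (level Y n) / 2 ^ n"
proof -
  interpret prob_space cantor_measure
    by (rule prob_space_cantor_measure)
  have "measure cantor_measure {x. restr x n \<in> Y} = (\<Sum>s\<in>level Y n. (1/2) ^ n)"
    unfolding restr_vimage_eq_UN
    using finite_level[of Y n] by (subst finite_measure_finite_Union)
       (auto simp: disjoint_family_on_def sets_restr_eq measure_restr_eq level_def)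
  then show ?thesis
    by (simp add: power_one_over)
qed

lemma trN_level_ratio_tendsto_0:
  assumes "Y \<in> trN"
  shows "(\<lambda>n. card (level Y n) / 2 ^ n) \<longlonglongrightarrow> 0"
proof -
  interpret prob_space cantor_measure
    by (rule prob_space_cantor_measure)
  obtain B where B: "B \<in> null_sets cantor_measure" "{x. \<exists>\<^sub>\<infinity>n. restr x n \<in> Y} \<subseteq> B"
    using assms unfolding trN_def lebesgue_null_def by auto
  define U where "U m = (\<Union>n\<in>{m..}. {x. restr x n \<in> Y})" for m
  have sets_U: "U m \<in> sets cantor_measure" for m
    unfolding U_def using sets_restr_vimage by blast
  have "decseq U"
    unfolding decseq_def U_def by (intro allI impI UN_mono) auto
  then have "(\<lambda>m. measure cantor_measure (U m)) \<longlonglongrightarrow> measure cantor_measure (\<Inter>m. U m)"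
    using sets_U by (intro finite_Lim_measure_decseq) auto
  moreover have "(\<Inter>m. U m) \<subseteq> {x. \<exists>\<^sub>\<infinity>n. restr x n \<in> Y}"
    unfolding U_def INFM_nat_le by auto
  then have "(\<Inter>m. U m) \<subseteq> B"
    using B(2) by (rule order_trans)
  then have "(\<Inter>m. U m) \<in> null_sets cantor_measure"
    using sets_U by (intro null_sets_subset[OF B(1)]) auto
  then have "measure cantor_measure (\<Inter>m. U m) = 0"
    by (rule measure_eq_0_null_sets)
  ultimately have lim_U: "(\<lambda>m. measure cantor_measure (U m)) \<longlonglongrightarrow> 0"
    by simp
  have "measure cantor_measure {x. restr x n \<in> Y} \<le> measure cantor_measure (U n)" for n
    using sets_U by (intro finite_measure_mono) (auto simp: U_def)
  then show ?thesis
    unfolding measure_restr_vimage[symmetric]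
    by (intro tendsto_sandwich[OF _ _ tendsto_const lim_U] always_eventually allI) auto
qed

section \<open>Coding strings by numbers\<close>

definition level_code :: "bool list \<Rightarrow> nat" where
  "level_code s = 2 ^ length s - 1 + horner_sum of_bool 2 s"

lemma level_code_lower: "2 ^ length s - 1 \<le> level_code s"
  by (simp add: level_code_def)

lemma level_code_upper: "level_code s < 2 ^ Suc (length s) - 1"
  using horner_sum_bound[of s, where 'a = nat] by (simp add: level_code_def)

lemma horner_sum_bool_inj:
  assumes "length s = length t" "horner_sum of_bool 2 s = (horner_sum of_bool 2 t :: nat)"
  shows "s = t"
proof -
  have "s ! n = t ! n" if "n < length s" for n
    using arg_cong[OF assms(2), of "\<lambda>m. bit m n"] that assms(1)
    by (simp add: bit_horner_sum_bit_iff)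
  with assms(1) show ?thesis
    by (simp add: list_eq_iff_nth_eq)
qed

lemma inj_level_code: "inj level_code"
proof (rule injI)
  fix s t :: "bool list"
  assume eq: "level_code s = level_code t"
  have "\<not> length s < length t" if "level_code s = level_code t" for s t :: "bool list"
  proof
    assume "length s < length t"
    then have "(2::nat) ^ Suc (length s) \<le> 2 ^ length t"
      by (intro power_increasing) auto
    then show False
      using level_code_upper[of s] level_code_lower[of t] that by linarith
  qed
  with eq have "length s = length t"
    by (metis linorder_neqE_nat)
  moreover have "horner_sum of_bool 2 s = (horner_sum of_bool 2 t :: nat)"
    using eq \<open>length s = length t\<close> unfolding level_code_def by (metis add_left_cancel)
  ultimately show "s = t"
    by (rule horner_sum_bool_inj)
qed

lemma surj_level_code: "surj level_code"
proof -
  have "m \<in> range level_code" for m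
  proof -
    obtain n where n: "2 ^ n \<le> m + 1" "m + 1 < 2 ^ (n + 1)"
      using ex_power_ivl1[of 2 "m + 1"] by auto
    define r where "r = m + 1 - 2 ^ n"
    have "r < 2 ^ n"
      using n by (simp add: r_def)
    then have "horner_sum of_bool 2 (map (bit r) [0..<n]) = r"
      by (simp add: horner_sum_bit_eq_take_bit take_bit_nat_eq_self_iff)
    then have "level_code (map (bit r) [0..<n]) = m"
      using n(1) by (simp add: level_code_def r_def)
    then show ?thesis
      by (metis rangeI)
  qed
  then show ?thesis
    by auto
qed

lemma bij_level_code: "bij level_code"
  by (simp add: bij_def inj_level_code surj_level_code)

lemma finite_exponents_le: "finite {j. (2::nat) ^ j \<le> N}"
  by (rule finite_subset[of _ "{..N}"]) (auto intro: order_trans[OF less_imp_le[OF less_exp]])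

lemma exponents_le_eq_atMost:
  assumes "2 ^ n \<le> N" "N < 2 ^ Suc n"
  shows "{j. (2::nat) ^ j \<le> N} = {..n}"
proof -
  have "2 ^ j \<le> N \<longleftrightarrow> j \<le> n" for j
  proof
    assume "2 ^ j \<le> N"
    with assms(2) have "(2::nat) ^ j < 2 ^ Suc n"
      by linarith
    then show "j \<le> n"
      using power_strict_increasing_iff[of "2::nat" j "Suc n"] by simp
  next
    assume "j \<le> n"
    then have "(2::nat) ^ j \<le> 2 ^ n"
      by simp
    with assms(1) show "2 ^ j \<le> N"
      by linarith
  qed
  then show ?thesis
    by auto
qed

lemma card_level_code_image_less:
  fixes Y :: "bool list set"
  shows "card (level_code ` Y \<inter> {..<N}) \<le> (\<Sum>j | (2::nat) ^ j \<le> N. card (level Y j))"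
proof -
  have "level_code ` Y \<inter> {..<N} \<subseteq> level_code ` (\<Union>j\<in>{j. (2::nat) ^ j \<le> N}. level Y j)"
  proof
    fix m assume "m \<in> level_code ` Y \<inter> {..<N}"
    then obtain s where s: "s \<in> Y" "m = level_code s" "level_code s < N"
      by auto
    then have "2 ^ length s \<le> N"
      using level_code_lower[of s] by (simp add: Suc_le_eq less_diff_conv2[symmetric])
    with s show "m \<in> level_code ` (\<Union>j\<in>{j. (2::nat) ^ j \<le> N}. level Y j)"
      by (auto simp: level_def)
  qed
  moreover have fin: "finite (\<Union>j\<in>{j. (2::nat) ^ j \<le> N}. level Y j)"
    by (intro finite_UN_I finite_exponents_le finite_level)
  ultimately have "card (level_code ` Y \<inter> {..<N}) \<le> card (level_code ` (\<Union>j\<in>{j. (2::nat) ^ j \<le> N}. level Y j))"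
    by (intro card_mono finite_imageI)
  also have "\<dots> \<le> card (\<Union>j\<in>{j. (2::nat) ^ j \<le> N}. level Y j)"
    by (rule card_image_le[OF fin])
  also have "\<dots> \<le> (\<Sum>j | (2::nat) ^ j \<le> N. card (level Y j))"
    using finite_exponents_le by (rule card_UN_le)
  finally show ?thesis .
qed

lemma sum_powers_two_le: "(\<Sum>j | (2::nat) ^ j \<le> N. (2::real) ^ j) \<le> 2 * real N"
proof (cases "N = 0")
  case False
  then obtain n where n: "2 ^ n \<le> N" "N < 2 ^ Suc n"
    using ex_power_ivl1[of 2 N] by auto
  have "(2::real) ^ n \<le> real N"
    using n(1) by (metis of_nat_le_iff of_nat_numeral of_nat_power)
  have "(\<Sum>j | (2::nat) ^ j \<le> N. (2::real) ^ j) = (\<Sum>j\<le>n. 2 ^ j)"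
    by (simp only: exponents_le_eq_atMost[OF n])
  also have "\<dots> = 2 * 2 ^ n - 1"
    by (induction n) auto
  also have "\<dots> \<le> 2 * real N"
    using \<open>2 ^ n \<le> real N\<close> by linarith
  finally show ?thesis .
qed simp

lemma dyadic_sum_le:
  fixes y :: "nat \<Rightarrow> real"
  assumes nonneg: "\<And>j. 0 \<le> y j" and small: "\<And>j. J \<le> j \<Longrightarrow> y j \<le> \<epsilon> * 2 ^ j" and "0 \<le> \<epsilon>"
  shows "(\<Sum>j | (2::nat) ^ j \<le> N. y j) \<le> (\<Sum>j<J. y j) + 2 * \<epsilon> * N"
proof -
  define D where "D = {j. (2::nat) ^ j \<le> N}"
  have "(\<Sum>j\<in>D. y j) = (\<Sum>j\<in>D \<inter> {..<J}. y j) + (\<Sum>j\<in>D - {..<J}. y j)"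
    using finite_exponents_le by (simp add: D_def sum.Int_Diff)
  also have "(\<Sum>j\<in>D \<inter> {..<J}. y j) \<le> (\<Sum>j<J. y j)"
    using nonneg by (intro sum_mono2) auto
  also have "(\<Sum>j\<in>D - {..<J}. y j) \<le> (\<Sum>j\<in>D - {..<J}. \<epsilon> * 2 ^ j)"
    using small by (intro sum_mono) auto
  also have "\<dots> \<le> (\<Sum>j\<in>D. \<epsilon> * 2 ^ j)"
    using finite_exponents_le \<open>0 \<le> \<epsilon>\<close> by (intro sum_mono2) (auto simp: D_def)
  also have "\<dots> = \<epsilon> * (\<Sum>j\<in>D. 2 ^ j)"
    by (rule sum_distrib_left[symmetric])
  also have "\<dots> \<le> \<epsilon> * (2 * N)"
    using sum_powers_two_le[of N] \<open>0 \<le> \<epsilon>\<close> by (simp add: D_def mult_left_mono)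
  finally show ?thesis
    by (simp add: D_def)
qed

lemma dyadic_sums_tendsto_0:
  fixes y :: "nat \<Rightarrow> real"
  assumes nonneg: "\<And>j. 0 \<le> y j" and lim: "(\<lambda>j. y j / 2 ^ j) \<longlonglongrightarrow> 0"
  shows "(\<lambda>N::nat. (\<Sum>j | (2::nat) ^ j \<le> N. y j) / N) \<longlonglongrightarrow> 0"
proof (rule LIMSEQ_I)
  fix r :: real
  assume "0 < r"
  then obtain J where "\<forall>j\<ge>J. norm (y j / 2 ^ j - 0) < r / 4"
    using LIMSEQ_D[OF lim, of "r / 4"] by auto
  then have "y j / 2 ^ j < r / 4" if "J \<le> j" for j
    using that nonneg by (simp add: abs_of_nonneg)
  then have small: "y j \<le> r / 4 * 2 ^ j" if "J \<le> j" for j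
    using that by (simp add: divide_less_eq less_imp_le)
  define C where "C = (\<Sum>j<J. y j)"
  obtain N0 :: nat where N0: "2 * C / r < N0"
    using reals_Archimedean2 by blast
  have "(\<Sum>j | (2::nat) ^ j \<le> N. y j) / N < r" if "N0 < N" for N
  proof -
    have "(\<Sum>j | (2::nat) ^ j \<le> N. y j) \<le> C + r / 2 * N"
      using dyadic_sum_le[OF nonneg small, where N = N] \<open>0 < r\<close> by (simp add: C_def)
    moreover have "2 * C / r < N"
      using N0 that of_nat_less_iff[of N0 N, where 'a = real] by linarith
    then have "C / N < r / 2"
      using that \<open>0 < r\<close> by (simp add: field_simps)
    ultimately show ?thesis
      using that by (simp add: field_simps)
  qed
  moreover have "0 \<le> (\<Sum>j | (2::nat) ^ j \<le> N. y j)" for N :: nat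
    using nonneg by (intro sum_nonneg) auto
  ultimately show "\<exists>M. \<forall>N\<ge>M. norm ((\<Sum>j | (2::nat) ^ j \<le> N. y j) / real N - 0) < r"
    by (intro exI[of _ "Suc N0"] allI impI) (simp add: abs_of_nonneg Suc_le_eq)
qed

lemma level_code_image_densZ:
  assumes "Y \<in> trN"
  shows "level_code ` Y \<in> densZ"
proof -
  have lim: "(\<lambda>N::nat. (\<Sum>j | (2::nat) ^ j \<le> N. real (card (level Y j))) / N) \<longlonglongrightarrow> 0"
    using trN_level_ratio_tendsto_0[OF assms] by (intro dyadic_sums_tendsto_0) auto
  have le: "card (level_code ` Y \<inter> {..<N}) / N \<le> (\<Sum>j | (2::nat) ^ j \<le> N. real (card (level Y j))) / N"
    for N
    using card_level_code_image_less[of Y N]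
    by (intro divide_right_mono) (simp_all flip: of_nat_sum)
  show ?thesis
    unfolding densZ_def mem_Collect_eq
    by (rule tendsto_sandwich[OF _ _ tendsto_const lim]) (simp_all add: le)
qed

lemma non_star_family_vimage_bij:
  assumes "bij h" and I_to_J: "\<And>Y. Y \<in> I \<Longrightarrow> h ` Y \<in> J" and "non_star_family J F"
  shows "non_star_family I ((\<lambda>X. h -` X) ` F)"
  unfolding non_star_family_def
proof (intro conjI ballI)
  fix Z
  assume "Z \<in> (\<lambda>X. h -` X) ` F"
  then obtain X where "X \<in> F" "Z = h -` X"
    by blast
  moreover have "infinite X"
    using \<open>X \<in> F\<close> \<open>non_star_family J F\<close> by (simp add: non_star_family_def)
  ultimately show "infinite Z"
    using \<open>bij h\<close> by (metis bij_def finite_imageI surj_image_vimage_eq)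
next
  fix Y
  assume "Y \<in> I"
  then obtain X where "X \<in> F" "finite (X \<inter> h ` Y)"
    using I_to_J \<open>non_star_family J F\<close> unfolding non_star_family_def by blast
  moreover have "h -` X \<inter> Y \<subseteq> h -` (X \<inter> h ` Y)"
    by auto
  ultimately have "finite (h -` X \<inter> Y)"
    using \<open>bij h\<close> by (meson bij_def finite_subset finite_vimageI)
  with \<open>X \<in> F\<close> show "\<exists>Z\<in>(\<lambda>X. h -` X) ` F. finite (Z \<inter> Y)"
    by blast
qed

section \<open>Splitting\<close>

definition splits :: "'a set \<Rightarrow> 'a set \<Rightarrow> bool" where
  "splits A s \<longleftrightarrow> infinite (A \<inter> s) \<and> infinite (A - s)"

lemma splitting_family_iff: "splitting_family S \<longleftrightarrow> (\<forall>A. infinite A \<longrightarrow> (\<exists>s\<in>S. splits A s))"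
  by (simp add: splitting_family_def splits_def)

lemma not_splits_subset: "\<not> splits A s \<Longrightarrow> A' \<subseteq> A \<Longrightarrow> \<not> splits A' s"
  unfolding splits_def by (meson Diff_mono Int_mono finite_subset order_refl)

lemma exists_infinite_subset_unsplit:
  assumes "finite S" "infinite B"
  shows "\<exists>A\<subseteq>B. infinite A \<and> (\<forall>s\<in>S. \<not> splits A s)"
  using assms
proof (induction S rule: finite_induct)
  case empty
  then show ?case
    by blast
next
  case (insert s S)
  then obtain A where A: "A \<subseteq> B" "infinite A" "\<forall>s\<in>S. \<not> splits A s"
    by blast
  define A' where "A' = (if infinite (A \<inter> s) then A \<inter> s else A - s)"
  have "A' \<inter> s = {} \<or> A' - s = {}"
    by (auto simp: A'_def)
  then have "\<not> splits A' s"
    unfolding splits_def by (metis finite.emptyI)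
  moreover have "infinite A'"
    using A(2) by (auto simp: A'_def) (metis Int_Diff_Un finite_Un)
  moreover have "A' \<subseteq> A"
    by (auto simp: A'_def)
  moreover have "\<forall>s'\<in>S. \<not> splits A' s'"
    using A(3) \<open>A' \<subseteq> A\<close> not_splits_subset by blast
  ultimately show ?case
    using A(1) by (intro exI[of _ A']) auto
qed

lemma finite_not_splitting_family: "finite S \<Longrightarrow> \<not> splitting_family S"
  using exists_infinite_subset_unsplit[of S UNIV] by (auto simp: splitting_family_iff)

lemma eventually_enumerate_notin_finite:
  fixes A F :: "nat set"
  assumes "infinite A" "finite F"
  shows "\<forall>\<^sub>F i in sequentially. enumerate A i \<notin> F"
proof -
  obtain B where B: "\<forall>n\<in>F. n < B"
    using finite_nat_set_iff_bounded[THEN iffD1, OF assms(2)] by blast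
  have "\<forall>\<^sub>F i in sequentially. B \<le> enumerate A i"
    using eventually_ge_at_top[of B]
  proof (rule eventually_mono)
    fix i assume "B \<le> i"
    then show "B \<le> enumerate A i"
      using le_enumerate[OF assms(1), of i] by linarith
  qed
  then show ?thesis
    by (rule eventually_mono) (use B in \<open>meson leD\<close>)
qed

lemma eventually_enumerate_mem_constant:
  fixes A s :: "nat set"
  assumes "infinite A" "\<not> splits A s"
  obtains c where "\<forall>\<^sub>F i in sequentially. (enumerate A i \<in> s) = c"
proof (cases "finite (A \<inter> s)")
  case True
  from eventually_enumerate_notin_finite[OF assms(1) this]
  have "\<forall>\<^sub>F i in sequentially. (enumerate A i \<in> s) = False"
    by (rule eventually_mono) (use enumerate_in_set[OF assms(1)] in blast)
  then show ?thesis
    by (rule that)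
next
  case False
  with assms(2) have "finite (A - s)"
    by (simp add: splits_def)
  from eventually_enumerate_notin_finite[OF assms(1) this]
  have "\<forall>\<^sub>F i in sequentially. (enumerate A i \<in> s) = True"
    by (rule eventually_mono) (use enumerate_in_set[OF assms(1)] in blast)
  then show ?thesis
    by (rule that)
qed

section \<open>A branch and an interval partition attached to a set of strings\<close>

fun heavy_prefix :: "bool list set \<Rightarrow> nat \<Rightarrow> bool list" where
  "heavy_prefix X 0 = []"
| "heavy_prefix X (Suc n) =
     (if infinite {t \<in> X. take (Suc n) t = heavy_prefix X n @ [True]}
      then heavy_prefix X n @ [True] else heavy_prefix X n @ [False])"

lemma length_heavy_prefix [simp]: "length (heavy_prefix X n) = n"
  by (induction n) auto

lemma extensions_split:
  assumes "length u = n"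
  shows "{t \<in> X. take n t = u} \<subseteq>
    {t \<in> X. take (Suc n) t = u @ [True]} \<union> {t \<in> X. take (Suc n) t = u @ [False]} \<union> {u}"
proof
  fix t
  assume t: "t \<in> {t \<in> X. take n t = u}"
  show "t \<in> {t \<in> X. take (Suc n) t = u @ [True]} \<union> {t \<in> X. take (Suc n) t = u @ [False]} \<union> {u}"
  proof (cases "n < length t")
    case True
    then have "take (Suc n) t = u @ [t ! n]"
      using t by (simp add: take_Suc_conv_app_nth)
    then show ?thesis
      using t by (cases "t ! n") auto
  next
    case False
    then show ?thesis
      using t by auto
  qed
qed

lemma infinite_extensions_heavy_prefix:
  assumes "infinite X"
  shows "infinite {t \<in> X. take n t = heavy_prefix X n}"
proof (induction n)
  case 0
  then show ?case
    using assms by simp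
next
  case (Suc n)
  let ?ext = "\<lambda>b. {t \<in> X. take (Suc n) t = heavy_prefix X n @ [b]}"
  have "infinite (?ext True \<union> ?ext False \<union> {heavy_prefix X n})"
    using Suc.IH extensions_split[OF length_heavy_prefix, of X n] finite_subset by blast
  then have "infinite (?ext True) \<or> infinite (?ext False)"
    by simp
  then show ?case
    by (cases "infinite (?ext True)") simp_all
qed

definition heavy_branch :: "bool list set \<Rightarrow> nat \<Rightarrow> bool" where
  "heavy_branch X n = heavy_prefix X (Suc n) ! n"

lemma restr_heavy_branch: "restr (heavy_branch X) n = heavy_prefix X n"
proof (induction n)
  case 0
  then show ?case
    by (simp add: restr_def)
next
  case (Suc n)
  have "heavy_prefix X (Suc n) = heavy_prefix X n @ [heavy_branch X n]"
    by (simp add: heavy_branch_def nth_append)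
  then show ?case
    using Suc by (simp add: restr_def)
qed

lemma infinite_extensions_heavy_branch:
  "infinite X \<Longrightarrow> infinite {t \<in> X. take n t = restr (heavy_branch X) n}"
  using infinite_extensions_heavy_prefix by (simp add: restr_heavy_branch)

definition interval_index :: "(nat \<Rightarrow> nat) \<Rightarrow> nat \<Rightarrow> nat" where
  "interval_index q n = (LEAST i. n < q (Suc i))"

lemma less_interval_index_Suc:
  assumes "strict_mono q"
  shows "n < q (Suc (interval_index q n))"
proof -
  have "n < q (Suc n)"
    using strict_mono_imp_increasing[OF assms, of "Suc n"] by simp
  then show ?thesis
    unfolding interval_index_def by (rule LeastI)
qed

lemma interval_index_le: "n < q (Suc k) \<Longrightarrow> interval_index q n \<le> k"
  unfolding interval_index_def by (rule Least_le)

lemma le_interval_index: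
  assumes "strict_mono q" "q k \<le> n"
  shows "k \<le> interval_index q n"
proof (rule ccontr)
  assume "\<not> k \<le> interval_index q n"
  then have "q (Suc (interval_index q n)) \<le> q k"
    using strict_mono_less_eq[OF assms(1)] by simp
  with less_interval_index_Suc[OF assms(1), of n] assms(2) show False
    by simp
qed

lemma interval_index_le_self: "strict_mono q \<Longrightarrow> interval_index q n \<le> n"
  using strict_mono_imp_increasing[of q "Suc n"] by (intro interval_index_le) simp

lemma attains_values_if_slowly_unbounded:
  fixes f :: "nat \<Rightarrow> nat"
  assumes step: "\<And>i. i0 \<le> i \<Longrightarrow> f (Suc i) \<le> Suc (f i)"
    and unbounded: "\<And>v. \<exists>i\<ge>i0. v \<le> f i"
    and "f i0 \<le> v"
  shows "\<exists>i\<ge>i0. f i = v"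
proof (cases "f i0 = v")
  case False
  then have "\<not> v \<le> f (i0 + 0)"
    using \<open>f i0 \<le> v\<close> by simp
  moreover have "\<exists>k. v \<le> f (i0 + k)"
    using unbounded[of v] le_Suc_ex by blast
  ultimately obtain k where "\<not> v \<le> f (i0 + k)" "v \<le> f (i0 + Suc k)"
    using exists_least_lemma[of "\<lambda>k. v \<le> f (i0 + k)"] by blast
  moreover have "f (i0 + Suc k) \<le> Suc (f (i0 + k))"
    using step[of "i0 + k"] by simp
  ultimately show ?thesis
    by (intro exI[of _ "i0 + Suc k"]) simp
qed auto

lemma splits_even_interval_index:
  assumes "strict_mono q" "range a \<subseteq> A" "\<And>v. v0 \<le> v \<Longrightarrow> \<exists>i. interval_index q (a i) = v"
  shows "splits A {n. even (interval_index q n)}"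
proof -
  have "infinite (A \<inter> {n. even (interval_index q n) \<longleftrightarrow> e})" for e
    unfolding infinite_nat_iff_unbounded_le
  proof
    fix m
    obtain i where i: "interval_index q (a i) = 2 * (m + v0) + (if e then 0 else 1)"
      using assms(3) by fastforce
    then have "m \<le> a i"
      using interval_index_le_self[OF assms(1), of "a i"] by (cases e) auto
    moreover have "even (interval_index q (a i)) \<longleftrightarrow> e"
      using i by simp
    ultimately show "\<exists>n\<ge>m. n \<in> A \<inter> {n. even (interval_index q n) \<longleftrightarrow> e}"
      using assms(2) by blast
  qed
  from this[of True] this[of False] show ?thesis
    unfolding splits_def set_diff_eq Int_def by simp
qed

definition extension_length :: "bool list set \<Rightarrow> nat \<Rightarrow> nat" where
  "extension_length X b = (LEAST l. \<exists>t\<in>X. take b t = restr (heavy_branch X) b \<and> length t = l)"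

lemma extension_length_attained:
  assumes "infinite X"
  obtains t where "t \<in> X" "take b t = restr (heavy_branch X) b" "length t = extension_length X b"
proof -
  obtain t where "t \<in> X" "take b t = restr (heavy_branch X) b"
    using infinite_extensions_heavy_branch[OF assms, of b] not_finite_existsD by auto
  then have "\<exists>l. \<exists>t\<in>X. take b t = restr (heavy_branch X) b \<and> length t = l"
    by blast
  from LeastI_ex[OF this] show ?thesis
    using that unfolding extension_length_def by blast
qed

fun cuts :: "bool list set \<Rightarrow> nat \<Rightarrow> nat" where
  "cuts X 0 = 0"
| "cuts X (Suc i) = Suc (cuts X i + Max (extension_length X ` {..cuts X i}))"

lemma strict_mono_cuts: "strict_mono (cuts X)"
  by (rule strict_monoI_Suc) simp

lemma extension_length_less_cuts:
  assumes "p \<le> cuts X i"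
  shows "extension_length X p < cuts X (Suc i)"
proof -
  have "extension_length X p \<le> Max (extension_length X ` {..cuts X i})"
    using assms by (intro Max_ge) auto
  then show ?thesis
    by simp
qed

definition even_cut_blocks :: "bool list set \<Rightarrow> nat set" where
  "even_cut_blocks X = {n. even (interval_index (cuts X) n)}"

lemma frequently_extension_length_less_next:
  fixes A :: "nat set"
  assumes "infinite A" "\<not> splits A (even_cut_blocks X)"
  shows "\<exists>i\<ge>i0. extension_length X (enumerate A i) < enumerate A (Suc i)"
proof (rule ccontr)
  assume "\<not> ?thesis"
  then have slow: "enumerate A (Suc i) \<le> extension_length X (enumerate A i)" if "i0 \<le> i" for i
    using that by (meson not_le)
  define f where "f i = interval_index (cuts X) (enumerate A i)" for i
  have "f (Suc i) \<le> Suc (f i)" if "i0 \<le> i" for i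
  proof -
    have "enumerate A i < cuts X (Suc (f i))"
      unfolding f_def by (rule less_interval_index_Suc[OF strict_mono_cuts])
    then have "extension_length X (enumerate A i) < cuts X (Suc (Suc (f i)))"
      by (intro extension_length_less_cuts) simp
    with slow[OF that] have "enumerate A (Suc i) < cuts X (Suc (Suc (f i)))"
      by linarith
    then show ?thesis
      unfolding f_def by (rule interval_index_le)
  qed
  moreover have "\<exists>i\<ge>i0. v \<le> f i" for v
  proof (intro exI conjI)
    show "i0 \<le> max i0 (cuts X v)"
      by simp
    have "cuts X v \<le> enumerate A (max i0 (cuts X v))"
      using le_enumerate[OF assms(1), of "max i0 (cuts X v)"] by linarith
    then show "v \<le> f (max i0 (cuts X v))"
      unfolding f_def by (rule le_interval_index[OF strict_mono_cuts])
  qed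
  ultimately have hits: "\<exists>i. f i = v" if "f i0 \<le> v" for v
    using attains_values_if_slowly_unbounded[of i0 f v] that by blast
  have "range (enumerate A) \<subseteq> A"
    using enumerate_in_set[OF assms(1)] by blast
  then have "splits A (even_cut_blocks X)"
    unfolding even_cut_blocks_def using hits unfolding f_def
    by (rule splits_even_interval_index[OF strict_mono_cuts])
  with assms(2) show False
    by contradiction
qed

section \<open>Strings constant on blocks\<close>

definition block :: "nat set \<Rightarrow> nat \<Rightarrow> nat set" where
  "block A j = enumerate A ` {j..<2 * j}"

definition block_constant_strings :: "nat set \<Rightarrow> bool list set" where
  "block_constant_strings A = {s. \<exists>j. enumerate A (2 * j) \<le> length s \<and> length s < enumerate A (2 * j + 2)
      \<and> (\<forall>w\<in>block A j. \<forall>w'\<in>block A j. s ! w = s ! w')}"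

lemma card_block: "infinite A \<Longrightarrow> card (block A j) = j"
  unfolding block_def
  by (subst card_image) (auto intro: strict_mono_imp_inj_on strict_mono_enumerate)

lemma null_sets_limsup_constant_on:
  assumes fin: "\<And>j. finite (W j)" and card: "\<And>j. j \<le> card (W j)"
  shows "limsup (\<lambda>j. {x. \<forall>w\<in>W j. \<forall>w'\<in>W j. x w = x w'}) \<in> null_sets cantor_measure"
proof -
  interpret prob_space cantor_measure
    by (rule prob_space_cantor_measure)
  define const where "const j c = {x. \<forall>i\<in>W j. x i = c}" for j and c :: bool
  have sets_const: "const j c \<in> sets cantor_measure" for j c
    unfolding const_def using sets_cantor_cylinder[OF fin, of j "\<lambda>_. c"] by simp
  have eq: "{x. \<forall>w\<in>W j. \<forall>w'\<in>W j. x w = x w'} = const j True \<union> const j False" for j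
    unfolding const_def by auto
  have bound: "measure cantor_measure (const j True \<union> const j False) \<le> 2 * (1/2) ^ j" for j
  proof -
    have "measure cantor_measure (const j c) \<le> (1/2) ^ j" for c
      using measure_cantor_cylinder[OF fin, of j "\<lambda>_. c"] card[of j]
      by (simp add: const_def power_decreasing)
    from this[of True] this[of False] show ?thesis
      using measure_subadditive[OF sets_const sets_const, of j True j False] by simp
  qed
  have "summable (\<lambda>j. 2 * (1/2::real) ^ j)"
    by (intro summable_mult summable_geometric) simp
  then have "summable (\<lambda>j. measure cantor_measure (const j True \<union> const j False))"
    by (rule summable_comparison_test') (simp add: bound)
  moreover have "const j True \<union> const j False \<in> sets cantor_measure" for j
    using sets_const by blast
  ultimately show ?thesis
    unfolding eq by (intro borel_cantelli_limsup1) (simp_all add: less_top[symmetric])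
qed

lemma block_constant_strings_trN:
  assumes "infinite A"
  shows "block_constant_strings A \<in> trN"
proof -
  let ?C = "\<lambda>j. {x. \<forall>w\<in>block A j. \<forall>w'\<in>block A j. x w = x w'}"
  have "x \<in> limsup ?C" if x: "\<exists>\<^sub>\<infinity>n. restr x n \<in> block_constant_strings A" for x
  proof -
    have "x \<in> (\<Union>j\<in>{M..}. ?C j)" for M
    proof -
      obtain n where n: "enumerate A (2 * M) \<le> n" "restr x n \<in> block_constant_strings A"
        using x unfolding INFM_nat_le by blast
      then obtain j where j: "enumerate A (2 * j) \<le> n" "n < enumerate A (2 * j + 2)"
        and const: "\<forall>w\<in>block A j. \<forall>w'\<in>block A j. restr x n ! w = restr x n ! w'"
        unfolding block_constant_strings_def by auto
      have "enumerate A (2 * M) < enumerate A (2 * j + 2)"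
        using n(1) j(2) by linarith
      then have "M \<le> j"
        using strict_mono_less[OF strict_mono_enumerate[OF assms]] by simp
      moreover have "w < n" if "w \<in> block A j" for w
      proof -
        obtain k where "k < 2 * j" "w = enumerate A k"
          using \<open>w \<in> block A j\<close> unfolding block_def by auto
        then have "w < enumerate A (2 * j)"
          using strict_mono_less[OF strict_mono_enumerate[OF assms]] by simp
        with j(1) show ?thesis
          by linarith
      qed
      ultimately show ?thesis
        using const by auto
    qed
    then show ?thesis
      unfolding limsup_INF_SUP by auto
  qed
  moreover have "limsup ?C \<in> null_sets cantor_measure"
    using card_block[OF assms] by (intro null_sets_limsup_constant_on) (auto simp: block_def)
  ultimately show ?thesis
    unfolding trN_def lebesgue_null_def by blast
qed

lemma prefix_mem_block_constant_strings:
  fixes A :: "nat set"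
  assumes "infinite A" and const: "\<And>k. m \<le> k \<Longrightarrow> x (enumerate A k) = c" and "2 * m \<le> i"
    and prefix: "take (enumerate A i) t = restr x (enumerate A i)"
    and short: "length t < enumerate A (Suc i)"
  shows "t \<in> block_constant_strings A"
proof -
  let ?a = "enumerate A"
  have mono: "?a k \<le> ?a l \<longleftrightarrow> k \<le> l" "?a k < ?a l \<longleftrightarrow> k < l" for k l
    using strict_mono_less_eq strict_mono_less strict_mono_enumerate[OF assms(1)] by blast+
  define j where "j = i div 2"
  have j: "2 * j \<le> i" "i < 2 * j + 2" "m \<le> j"
    using \<open>2 * m \<le> i\<close> unfolding j_def by presburger+
  have "?a i \<le> length t"
    using arg_cong[OF prefix, of length] by simp
  then have "?a (2 * j) \<le> length t"
    using mono(1)[of "2 * j" i] j by simp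
  moreover have "length t < ?a (2 * j + 2)"
    using short mono(1)[of "Suc i" "2 * j + 2"] j by simp
  moreover have "t ! w = c" if w: "w \<in> block A j" for w
  proof -
    obtain k where k: "j \<le> k" "k < 2 * j" "w = ?a k"
      using w unfolding block_def by auto
    then have "w < ?a i"
      using mono(2)[of k i] j by simp
    then have "t ! w = x w"
      using arg_cong[OF prefix, of "\<lambda>s. s ! w"] by simp
    also have "\<dots> = c"
      using k const[of k] j by simp
    finally show ?thesis .
  qed
  ultimately show ?thesis
    unfolding block_constant_strings_def by auto
qed

definition branch_set :: "bool list set \<Rightarrow> nat set" where
  "branch_set X = {n. heavy_branch X n}"

lemma splits_branch_set_or_even_cut_blocks:
  fixes A :: "nat set"
  assumes "infinite X" "infinite A" "finite (X \<inter> block_constant_strings A)"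
  shows "splits A (branch_set X) \<or> splits A (even_cut_blocks X)"
proof (rule ccontr)
  assume "\<not> ?thesis"
  then have "\<not> splits A (branch_set X)" "\<not> splits A (even_cut_blocks X)"
    by auto
  obtain c where "\<forall>\<^sub>F k in sequentially. (enumerate A k \<in> branch_set X) = c"
    using eventually_enumerate_mem_constant[OF assms(2) \<open>\<not> splits A (branch_set X)\<close>] .
  then obtain i0 where const: "\<And>k. i0 \<le> k \<Longrightarrow> heavy_branch X (enumerate A k) = c"
    unfolding eventually_sequentially branch_set_def by auto
  obtain L where L: "\<And>t. t \<in> X \<inter> block_constant_strings A \<Longrightarrow> length t \<le> L"
    using finite_nat_set_iff_bounded_le[THEN iffD1, OF finite_imageI[OF assms(3), of length]] by auto
  obtain i where i: "2 * i0 + Suc L \<le> i" "extension_length X (enumerate A i) < enumerate A (Suc i)"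
    using frequently_extension_length_less_next[OF assms(2) \<open>\<not> splits A (even_cut_blocks X)\<close>] by blast
  obtain t where t: "t \<in> X" "take (enumerate A i) t = restr (heavy_branch X) (enumerate A i)"
    "length t = extension_length X (enumerate A i)"
    using extension_length_attained[OF assms(1)] by blast
  have "t \<in> block_constant_strings A"
    using i t
    by (intro prefix_mem_block_constant_strings[where x = "heavy_branch X" and m = i0 and i = i,
          OF assms(2) const])
       simp_all
  with t(1) L have "length t \<le> L"
    by blast
  moreover have "i \<le> length t"
    using arg_cong[OF t(2), of length] le_enumerate[OF assms(2), of i] by simp
  ultimately show False
    using i(1) by linarith
qed

lemma splitting_family_of_non_star_trN:
  assumes "non_star_family trN F"
  shows "splitting_family (branch_set ` F \<union> even_cut_blocks ` F)"
  unfolding splitting_family_iff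
proof (intro allI impI)
  fix A :: "nat set"
  assume "infinite A"
  then obtain X where X: "X \<in> F" "finite (X \<inter> block_constant_strings A)"
    using assms block_constant_strings_trN unfolding non_star_family_def by blast
  have "infinite X"
    using assms \<open>X \<in> F\<close> unfolding non_star_family_def by blast
  then have "splits A (branch_set X) \<or> splits A (even_cut_blocks X)"
    using splits_branch_set_or_even_cut_blocks \<open>infinite A\<close> X(2) by blast
  with X(1) show "\<exists>s\<in>branch_set ` F \<union> even_cut_blocks ` F. splits A s"
    by blast
qed

lemma Un_images_lepoll:
  assumes "infinite F"
  shows "f ` F \<union> g ` F \<lesssim> F"
proof -
  have "ordLeq3 (card_of (f ` F \<union> g ` F)) (card_of F)"
    by (rule card_of_Un_ordLeq_infinite_Field[where r = "card_of F", unfolded Field_card_of])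
       (use assms in \<open>auto simp: card_of_image card_of_Card_order card_of_card_order_on\<close>)
  then show ?thesis
    by (simp add: lepoll_def card_of_ordLeq[symmetric])
qed

theorem mainTheorem16:
  shows "(\<forall>F. non_star_family trN F \<longrightarrow> (\<exists>S. splitting_family S \<and> S \<lesssim> F))
       \<and> (\<forall>F. non_star_family densZ F \<longrightarrow> (\<exists>G. non_star_family trN G \<and> G \<lesssim> F))"
proof (intro conjI allI impI)
  fix F
  assume "non_star_family trN F"
  then have splitting: "splitting_family (branch_set ` F \<union> even_cut_blocks ` F)"
    by (rule splitting_family_of_non_star_trN)
  then have "infinite F"
    using finite_not_splitting_family by (metis finite_Un finite_imageI)
  with splitting show "\<exists>S. splitting_family S \<and> S \<lesssim> F"
    by (intro exI[of _ "branch_set ` F \<union> even_cut_blocks ` F"] conjI Un_images_lepoll)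
next
  fix F
  assume "non_star_family densZ F"
  with bij_level_code level_code_image_densZ
  have "non_star_family trN ((\<lambda>X. level_code -` X) ` F)"
    by (rule non_star_family_vimage_bij)
  moreover have "(\<lambda>X. level_code -` X) ` F \<lesssim> F"
    by (rule image_lepoll)
  ultimately show "\<exists>G. non_star_family trN G \<and> G \<lesssim> F"
    by blast
qed

end
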